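(* Let $G$ be a digraph of directed tree-width at most $k$. Then there is a directed tree-decomposition $(T,\mathcal{X},\mathcal{W})$, $T=(V_T,E_T)$, of $G$ of width at most $k$ such that $|W_r|=1$ for every $r\in V_T$.
   Context: Digraphs are finite, without loops or multiple arcs. An out-tree is a digraph whose underlying graph is a tree, with a root such that all arcs are directed away from it; $u\le v$ means there is a directed path with $\ge0$ arcs from $u$ to $v$. For $Z\subseteq V$, a set $S\subseteq V$ is $Z$-normal if there is no directed walk in $G-Z$ with first and last vertices in $S$ that uses a vertex of $G-(Z\cup S)$. A directed tree-decomposition of $G=(V,E)$ is a triple $(T,\mathcal{X},\mathcal{W})$ with $T=(V_T,E_T)$ an out-tree, $\mathcal{X}=\{X_e:e\in E_T\}$ and $\mathcal{W}=\{W_r:r\in V_T\}$ subsets of $V$, such that $\mathcal{W}$ is a partition of $V$ into nonempty sets and for every $(u,v)\in E_T$ the set $\bigcup\{W_r: r\in V_T, v\le r\}$ is $X_{(u,v)}$-normal. Its width is $\max_{r\in V_T}|W_r\cup\bigcup_{e\sim r}X_e|-1$ ($e\sim r$: $r$ is an end vertex of $e$); the directed tree-width is the minimum width. *)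

theory Defs
  imports Main
begin

text \<open>A digraph is given by a finite vertex set V and an arc set E \<subseteq> V \<times> V
  without loops (multiple arcs are excluded automatically since E is a set).\<close>
definition digraph :: "'a set \<Rightarrow> ('a \<times> 'a) set \<Rightarrow> bool" where
  "digraph V E \<longleftrightarrow> finite V \<and> E \<subseteq> V \<times> V \<and> (\<forall>v. (v, v) \<notin> E)"

definition und :: "('a \<times> 'a) set \<Rightarrow> ('a \<times> 'a) set" where
  "und E = E \<union> E\<inverse>"

definition ucycle :: "('a \<times> 'a) set \<Rightarrow> 'a list \<Rightarrow> bool" where
  "ucycle U xs \<longleftrightarrow> length xs \<ge> 3 \<and> distinct xs
     \<and> (\<forall>i. Suc i < length xs \<longrightarrow> (xs ! i, xs ! Suc i) \<in> U)
     \<and> (last xs, hd xs) \<in> U"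

text \<open>The underlying graph of the digraph (V,E) is a tree: finite, nonempty, connected,
  acyclic, and no pair of opposite arcs (which would form a 2-cycle / double edge).\<close>
definition underlying_tree :: "'b set \<Rightarrow> ('b \<times> 'b) set \<Rightarrow> bool" where
  "underlying_tree V E \<longleftrightarrow> finite V \<and> V \<noteq> {} \<and> E \<subseteq> V \<times> V \<and> (\<forall>v. (v, v) \<notin> E)
     \<and> (\<forall>u v. (u, v) \<in> E \<longrightarrow> (v, u) \<notin> E)
     \<and> (\<forall>u\<in>V. \<forall>v\<in>V. (u, v) \<in> (und E)\<^sup>*)
     \<and> (\<nexists>xs. ucycle (und E) xs)"

definition out_tree :: "'b set \<Rightarrow> ('b \<times> 'b) set \<Rightarrow> bool" where
  "out_tree V E \<longleftrightarrow> underlying_tree V E \<and> (\<exists>r\<in>V. \<forall>v\<in>V. (r, v) \<in> E\<^sup>*)"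

definition walk_avoiding :: "'a set \<Rightarrow> ('a \<times> 'a) set \<Rightarrow> 'a set \<Rightarrow> 'a list \<Rightarrow> bool" where
  "walk_avoiding V E Z w \<longleftrightarrow> w \<noteq> [] \<and> set w \<subseteq> V - Z
     \<and> (\<forall>i. Suc i < length w \<longrightarrow> (w ! i, w ! Suc i) \<in> E)"

definition normal :: "'a set \<Rightarrow> ('a \<times> 'a) set \<Rightarrow> 'a set \<Rightarrow> 'a set \<Rightarrow> bool" where
  "normal V E Z S \<longleftrightarrow> (\<nexists>w. walk_avoiding V E Z w \<and> hd w \<in> S \<and> last w \<in> S
                            \<and> (\<exists>x\<in>set w. x \<in> V - (Z \<union> S)))"

definition is_dtd :: "'a set \<Rightarrow> ('a \<times> 'a) set \<Rightarrow> nat set \<Rightarrow> (nat \<times> nat) set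
    \<Rightarrow> (nat \<times> nat \<Rightarrow> 'a set) \<Rightarrow> (nat \<Rightarrow> 'a set) \<Rightarrow> bool" where
  "is_dtd V E VT ET X W \<longleftrightarrow> out_tree VT ET
     \<and> (\<forall>e\<in>ET. X e \<subseteq> V)
     \<and> (\<forall>r\<in>VT. W r \<noteq> {} \<and> W r \<subseteq> V)
     \<and> (\<forall>r\<in>VT. \<forall>s\<in>VT. r \<noteq> s \<longrightarrow> W r \<inter> W s = {})
     \<and> (\<Union>r\<in>VT. W r) = V
     \<and> (\<forall>(u, v)\<in>ET. normal V E (X (u, v)) (\<Union>{W r |r. r \<in> VT \<and> (v, r) \<in> ET\<^sup>*}))"

definition dtd_width :: "nat set \<Rightarrow> (nat \<times> nat) set
    \<Rightarrow> (nat \<times> nat \<Rightarrow> 'a set) \<Rightarrow> (nat \<Rightarrow> 'a set) \<Rightarrow> nat" where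
  "dtd_width VT ET X W =
     Max ((\<lambda>r. card (W r \<union> \<Union>{X e |e. e \<in> ET \<and> (fst e = r \<or> snd e = r)})) ` VT) - 1"

definition directed_tree_width :: "'a set \<Rightarrow> ('a \<times> 'a) set \<Rightarrow> nat" where
  "directed_tree_width V E =
     (LEAST w. \<exists>VT ET X W. is_dtd V E VT ET X W \<and> dtd_width VT ET X W = w)"

end

theory Submission
  imports Defs
begin

(* A bag W_r with at least two vertices can be split: move one of its vertices w into a new leaf n
   below r and set X_(r,n) = {w}.  Every old node still sees the same vertex set W_r together with
   the guards of its incident edges, the new node sees only {w}, and the union of the bags below
   any old node is unchanged, so all old normality conditions survive.  The new edge is normal
   because a walk avoiding {w} cannot start in {w}.  Splitting thus keeps the width and decreases
   the sum of |W_r| - 1, and iterating it from an optimal decomposition gives singleton bags. *)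

lemma ucycle_succ:
  assumes "ucycle U xs" "i < length xs"
  shows "(xs ! i, xs ! (Suc i mod length xs)) \<in> U"
proof (cases "Suc i < length xs")
  case True
  then show ?thesis using assms(1) by (simp add: ucycle_def)
next
  case False
  with assms have "i = length xs - 1" "xs \<noteq> []" by auto
  then show ?thesis using assms(1) by (simp add: ucycle_def last_conv_nth hd_conv_nth)
qed

lemma ucycle_two_neighbours:
  assumes cyc: "ucycle U xs" and x: "x \<in> set xs"
  obtains a b where "a \<noteq> b" "(x, a) \<in> U" "(b, x) \<in> U"
proof -
  define L where "L = length xs"
  obtain i where i: "i < L" "xs ! i = x" using x by (metis L_def in_set_conv_nth)
  have L: "L \<ge> 3" "distinct xs" using cyc by (auto simp: ucycle_def L_def)
  define j where "j = (if i = 0 then L - 1 else i - 1)"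
  have j: "j < L" "Suc j mod L = i" using i L by (auto simp: j_def)
  have "Suc i mod L = (if Suc i < L then Suc i else 0)"
    using i by (metis Suc_lessI mod_less mod_self)
  then have "Suc i mod L \<noteq> j" using i L by (auto simp: j_def)
  moreover have "Suc i mod L < L" using L by simp
  ultimately have "xs ! (Suc i mod L) \<noteq> xs ! j"
    using j(1) L(2) by (simp add: L_def nth_eq_iff_index_eq)
  moreover have "(x, xs ! (Suc i mod L)) \<in> U" using ucycle_succ[OF cyc, of i] i by (simp add: L_def)
  moreover have "(xs ! j, x) \<in> U" using ucycle_succ[OF cyc, of j] j i by (simp add: L_def)
  ultimately show thesis using that by blast
qed

lemma ucycle_mono:
  assumes "ucycle U xs" and "\<And>a b. a \<in> set xs \<Longrightarrow> b \<in> set xs \<Longrightarrow> (a, b) \<in> U \<Longrightarrow> (a, b) \<in> U'"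
  shows "ucycle U' xs"
proof -
  have "xs \<noteq> []" using assms(1) by (auto simp: ucycle_def)
  then have "(last xs, hd xs) \<in> U'" using assms by (simp add: ucycle_def)
  moreover have "(xs ! i, xs ! Suc i) \<in> U'" if "Suc i < length xs" for i
    using that assms by (simp add: ucycle_def)
  ultimately show ?thesis using assms(1) by (simp add: ucycle_def)
qed

lemma und_insert: "und (insert (a, b) R) = und R \<union> {(a, b), (b, a)}"
  unfolding und_def by auto

lemma sym_und: "sym (und R)"
  unfolding und_def sym_def by auto

lemma underlying_tree_add_leaf:
  assumes T: "underlying_tree VT ET" and r: "r \<in> VT" and n: "n \<notin> VT"
  shows "underlying_tree (insert n VT) (insert (r, n) ET)"
proof -
  let ?U = "und (insert (r, n) ET)"
  have sub: "ET \<subseteq> VT \<times> VT" using T by (simp add: underlying_tree_def)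
  have "\<nexists>xs. ucycle ?U xs"
  proof
    assume "\<exists>xs. ucycle ?U xs"
    then obtain xs where cyc: "ucycle ?U xs" ..
    have "n \<notin> set xs"
    proof
      assume "n \<in> set xs"
      then obtain a b where "a \<noteq> b" "(n, a) \<in> ?U" "(b, n) \<in> ?U"
        by (rule ucycle_two_neighbours[OF cyc])
      then show False using sub n by (auto simp: und_def)
    qed
    then have "ucycle (und ET) xs" by (intro ucycle_mono[OF cyc]) (auto simp: und_insert)
    then show False using T by (auto simp: underlying_tree_def)
  qed
  moreover have "\<forall>u\<in>insert n VT. \<forall>v\<in>insert n VT. (u, v) \<in> ?U\<^sup>*"
  proof -
    have "(u, r) \<in> ?U\<^sup>*" if "u \<in> insert n VT" for u
    proof (cases "u = n")
      case True
      then show ?thesis by (auto simp: und_def)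
    next
      case False
      then have "(u, r) \<in> (und ET)\<^sup>*" using that T r by (simp add: underlying_tree_def)
      moreover have "(und ET)\<^sup>* \<subseteq> ?U\<^sup>*" by (rule rtrancl_mono) (auto simp: und_def)
      ultimately show ?thesis by blast
    qed
    moreover have "sym (?U\<^sup>*)" by (rule sym_rtrancl[OF sym_und])
    ultimately show ?thesis by (meson rtrancl_trans symD)
  qed
  ultimately show ?thesis using T r n unfolding underlying_tree_def by auto
qed

lemma rtrancl_insert_leaf:
  assumes "n \<notin> Domain R"
  shows "(insert (r, n) R)\<^sup>* = R\<^sup>* \<union> {(x, n) |x. (x, r) \<in> R\<^sup>*}"
  using assms by (auto simp: rtrancl_insert Not_Domain_rtrancl)

lemma out_tree_add_leaf:
  assumes T: "out_tree VT ET" and r: "r \<in> VT" and n: "n \<notin> VT"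
  shows "out_tree (insert n VT) (insert (r, n) ET)"
proof -
  obtain r0 where r0: "r0 \<in> VT" "\<forall>v\<in>VT. (r0, v) \<in> ET\<^sup>*"
    using T by (auto simp: out_tree_def)
  have "n \<notin> Domain ET" using T n by (auto simp: out_tree_def underlying_tree_def)
  then have "\<forall>v\<in>insert n VT. (r0, v) \<in> (insert (r, n) ET)\<^sup>*"
    using r0 r by (simp add: rtrancl_insert_leaf)
  then show ?thesis
    using r0(1) T r n underlying_tree_add_leaf by (auto simp: out_tree_def)
qed

lemma normal_refl: "normal V E S S"
  unfolding normal_def walk_avoiding_def by (metis Diff_iff hd_in_set subsetD)

definition subtree_union :: "nat set \<Rightarrow> (nat \<times> nat) set \<Rightarrow> (nat \<Rightarrow> 'a set) \<Rightarrow> nat \<Rightarrow> 'a set" where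
  "subtree_union VT ET W v = \<Union>{W r |r. r \<in> VT \<and> (v, r) \<in> ET\<^sup>*}"

definition incident_edges :: "(nat \<times> nat) set \<Rightarrow> nat \<Rightarrow> (nat \<times> nat) set" where
  "incident_edges ET r = {e \<in> ET. fst e = r \<or> snd e = r}"

definition node_bag :: "(nat \<times> nat) set \<Rightarrow> (nat \<times> nat \<Rightarrow> 'a set) \<Rightarrow> (nat \<Rightarrow> 'a set) \<Rightarrow> nat \<Rightarrow> 'a set" where
  "node_bag ET X W r = W r \<union> \<Union>(X ` incident_edges ET r)"

lemma dtd_width_node_bag: "dtd_width VT ET X W = Max ((\<lambda>r. card (node_bag ET X W r)) ` VT) - 1"
proof -
  have "\<Union>{X e |e. e \<in> ET \<and> (fst e = r \<or> snd e = r)} = \<Union>(X ` incident_edges ET r)" for r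
    unfolding incident_edges_def by blast
  then show ?thesis by (simp add: dtd_width_def node_bag_def)
qed

lemma is_dtd_subtree_union:
  "is_dtd V E VT ET X W \<longleftrightarrow> out_tree VT ET
     \<and> (\<forall>e\<in>ET. X e \<subseteq> V)
     \<and> (\<forall>r\<in>VT. W r \<noteq> {} \<and> W r \<subseteq> V)
     \<and> (\<forall>r\<in>VT. \<forall>s\<in>VT. r \<noteq> s \<longrightarrow> W r \<inter> W s = {})
     \<and> (\<Union>r\<in>VT. W r) = V
     \<and> (\<forall>(u, v)\<in>ET. normal V E (X (u, v)) (subtree_union VT ET W v))"
  by (simp add: is_dtd_def subtree_union_def)

lemma
  assumes sub: "ET \<subseteq> VT \<times> VT" and r: "r \<in> VT" and w: "w \<in> W r" and n: "n \<notin> VT"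
  defines "W' \<equiv> W(r := W r - {w}, n := {w})"
  shows subtree_union_split_off:
      "v \<noteq> n \<Longrightarrow> subtree_union (insert n VT) (insert (r, n) ET) W' v = subtree_union VT ET W v"
    and subtree_union_split_off_leaf:
      "subtree_union (insert n VT) (insert (r, n) ET) W' n = {w}"
proof -
  have "n \<notin> Domain ET" using sub n by auto
  then have reach: "(insert (r, n) ET)\<^sup>* = ET\<^sup>* \<union> {(x, n) |x. (x, r) \<in> ET\<^sup>*}"
    by (rule rtrancl_insert_leaf)
  show "subtree_union (insert n VT) (insert (r, n) ET) W' v = subtree_union VT ET W v"
    if v: "v \<noteq> n"
  proof
    show "subtree_union (insert n VT) (insert (r, n) ET) W' v \<subseteq> subtree_union VT ET W v"
    proof
      fix x assume "x \<in> subtree_union (insert n VT) (insert (r, n) ET) W' v"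
      then obtain s where s: "s \<in> insert n VT" "(v, s) \<in> (insert (r, n) ET)\<^sup>*" "x \<in> W' s"
        unfolding subtree_union_def by blast
      show "x \<in> subtree_union VT ET W v"
      proof (cases "s = n")
        case True
        moreover have "(v, n) \<notin> ET\<^sup>*" using v sub n by (metis RangeE rtranclE mem_Sigma_iff subsetD)
        ultimately have "x = w" "(v, r) \<in> ET\<^sup>*" using s by (auto simp: W'_def reach)
        then show ?thesis using r w unfolding subtree_union_def by blast
      next
        case False
        then have "s \<in> VT" "(v, s) \<in> ET\<^sup>*" "x \<in> W s" using s by (auto simp: W'_def reach split: if_splits)
        then show ?thesis unfolding subtree_union_def by blast
      qed
    qed
  next
    show "subtree_union VT ET W v \<subseteq> subtree_union (insert n VT) (insert (r, n) ET) W' v"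
    proof
      fix x assume "x \<in> subtree_union VT ET W v"
      then obtain s where s: "s \<in> VT" "(v, s) \<in> ET\<^sup>*" "x \<in> W s"
        unfolding subtree_union_def by blast
      then have "(s = r \<and> x = w) \<and> n \<in> insert n VT \<and> (v, n) \<in> (insert (r, n) ET)\<^sup>* \<and> x \<in> W' n
          \<or> s \<in> insert n VT \<and> (v, s) \<in> (insert (r, n) ET)\<^sup>* \<and> x \<in> W' s"
        using n by (auto simp: W'_def reach)
      then show "x \<in> subtree_union (insert n VT) (insert (r, n) ET) W' v"
        unfolding subtree_union_def by blast
    qed
  qed
  show "subtree_union (insert n VT) (insert (r, n) ET) W' n = {w}"
    using \<open>n \<notin> Domain ET\<close> n r
    unfolding subtree_union_def reach by (auto simp: W'_def Not_Domain_rtrancl)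
qed

lemma
  fixes X :: "nat \<times> nat \<Rightarrow> 'a set"
  assumes sub: "ET \<subseteq> VT \<times> VT" and r: "r \<in> VT" and w: "w \<in> W r" and n: "n \<notin> VT"
  defines "W' \<equiv> W(r := W r - {w}, n := {w})" and "X' \<equiv> X((r, n) := {w})"
  shows node_bag_split_off: "s \<in> VT \<Longrightarrow> node_bag (insert (r, n) ET) X' W' s = node_bag ET X W s"
    and node_bag_split_off_leaf: "node_bag (insert (r, n) ET) X' W' n = {w}"
proof -
  have X'_old: "X' e = X e" if "e \<in> ET" for e using that sub n by (auto simp: X'_def)
  show "node_bag (insert (r, n) ET) X' W' s = node_bag ET X W s" if s: "s \<in> VT"
  proof -
    have "incident_edges (insert (r, n) ET) s = incident_edges ET s \<union> (if s = r then {(r, n)} else {})"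
      using s n by (auto simp: incident_edges_def)
    then have "node_bag (insert (r, n) ET) X' W' s
        = W' s \<union> (if s = r then X' (r, n) else {}) \<union> \<Union>(X' ` incident_edges ET s)"
      unfolding node_bag_def by auto
    also have "X' ` incident_edges ET s = X ` incident_edges ET s"
      using X'_old by (auto simp: incident_edges_def)
    also have "W' s \<union> (if s = r then X' (r, n) else {}) = W s"
      using s n w by (auto simp: W'_def X'_def)
    finally show ?thesis unfolding node_bag_def .
  qed
  have "incident_edges (insert (r, n) ET) n = {(r, n)}"
    using sub n r by (auto simp: incident_edges_def)
  then show "node_bag (insert (r, n) ET) X' W' n = {w}"
    unfolding node_bag_def W'_def X'_def by simp
qed

lemma dtd_width_split_off:
  assumes T: "out_tree VT ET" and r: "r \<in> VT" and w: "w \<in> W r" and n: "n \<notin> VT"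
  shows "dtd_width (insert n VT) (insert (r, n) ET) (X((r, n) := {w})) (W(r := W r - {w}, n := {w}))
       = dtd_width VT ET X W"
proof -
  have sub: "ET \<subseteq> VT \<times> VT" and fin: "finite VT" using T by (auto simp: out_tree_def underlying_tree_def)
  let ?f = "\<lambda>s. card (node_bag ET X W s)"
  let ?f' = "\<lambda>s. card (node_bag (insert (r, n) ET) (X((r, n) := {w})) (W(r := W r - {w}, n := {w})) s)"
  have "?f' ` insert n VT = insert 1 (?f ` VT)"
    using node_bag_split_off[where W = W, OF sub r w n] node_bag_split_off_leaf[where W = W, OF sub r w n]
    by simp
  moreover have "Max (insert 1 (?f ` VT)) = max 1 (Max (?f ` VT))" using fin r by (auto intro: Max_insert)
  ultimately show ?thesis unfolding dtd_width_node_bag by simp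
qed

lemma is_dtd_split_off:
  assumes D: "is_dtd V E VT ET X W" and r: "r \<in> VT" and w: "w \<in> W r" and wne: "W r \<noteq> {w}"
    and n: "n \<notin> VT"
  shows "is_dtd V E (insert n VT) (insert (r, n) ET) (X((r, n) := {w})) (W(r := W r - {w}, n := {w}))"
proof -
  define W' where "W' = W(r := W r - {w}, n := {w})"
  define X' where "X' = X((r, n) := {w})"
  have T: "out_tree VT ET" and XV: "\<forall>e\<in>ET. X e \<subseteq> V" and WV: "\<forall>s\<in>VT. W s \<noteq> {} \<and> W s \<subseteq> V"
    and disj: "\<forall>s\<in>VT. \<forall>t\<in>VT. s \<noteq> t \<longrightarrow> W s \<inter> W t = {}" and cover: "(\<Union>s\<in>VT. W s) = V"
    and norm: "\<forall>(u, v)\<in>ET. normal V E (X (u, v)) (subtree_union VT ET W v)"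
    using D by (simp_all add: is_dtd_subtree_union)
  have sub: "ET \<subseteq> VT \<times> VT" using T by (simp add: out_tree_def underlying_tree_def)
  have "w \<in> V" using WV r w by auto
  then have "\<forall>e\<in>insert (r, n) ET. X' e \<subseteq> V" using XV by (simp add: X'_def)
  moreover have "\<forall>s\<in>insert n VT. W' s \<noteq> {} \<and> W' s \<subseteq> V"
    using WV w wne \<open>w \<in> V\<close> r n by (auto simp: W'_def)
  moreover have "\<forall>s\<in>insert n VT. \<forall>t\<in>insert n VT. s \<noteq> t \<longrightarrow> W' s \<inter> W' t = {}"
    using disj r w n by (auto simp: W'_def)
  moreover have "(\<Union>s\<in>insert n VT. W' s) = V"
    using cover r w n by (auto simp: W'_def)
  moreover have "normal V E (X' (u, v)) (subtree_union (insert n VT) (insert (r, n) ET) W' v)"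
    if uv: "(u, v) \<in> insert (r, n) ET" for u v
  proof (cases "(u, v) = (r, n)")
    case True
    then show ?thesis
      using subtree_union_split_off_leaf[where W = W, OF sub r w n] normal_refl
      by (simp add: X'_def W'_def)
  next
    case False
    then have "(u, v) \<in> ET" using uv by auto
    then have "v \<noteq> n" using sub n by auto
    then show ?thesis
      using norm \<open>(u, v) \<in> ET\<close> subtree_union_split_off[where W = W, OF sub r w n]
      by (auto simp: X'_def W'_def)
  qed
  ultimately show ?thesis
    using out_tree_add_leaf[OF T r n] unfolding is_dtd_subtree_union W'_def X'_def by blast
qed

definition bag_excess :: "nat set \<Rightarrow> (nat \<Rightarrow> 'a set) \<Rightarrow> nat" where
  "bag_excess VT W = (\<Sum>r\<in>VT. card (W r) - 1)"

lemma bag_excess_split_off: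
  assumes fin: "finite VT" and r: "r \<in> VT" and w: "w \<in> W r" and wne: "W r \<noteq> {w}"
    and finW: "finite (W r)" and n: "n \<notin> VT"
  shows "bag_excess (insert n VT) (W(r := W r - {w}, n := {w})) < bag_excess VT W"
proof -
  let ?W' = "W(r := W r - {w}, n := {w})"
  have "W r - {w} \<noteq> {}" using w wne by auto
  then have "card (W r - {w}) > 0" using finW by (simp add: card_gt_0_iff)
  moreover have "card (?W' r) = card (W r) - 1" using r n w finW by (auto simp: card_Diff_singleton)
  ultimately have "card (?W' r) - 1 < card (W r) - 1" using finW w by (simp add: card_Diff_singleton)
  moreover have "card (?W' s) - 1 \<le> card (W s) - 1" if "s \<in> VT" for s
    using that n finW by (auto intro: diff_le_mono card_mono)
  ultimately have "(\<Sum>s\<in>VT. card (?W' s) - 1) < bag_excess VT W"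
    unfolding bag_excess_def using fin r by (intro sum_strict_mono_ex1) auto
  then show ?thesis using fin n by (simp add: bag_excess_def)
qed

lemma dtd_singleton_bags_same_width:
  assumes finV: "finite V" and D: "is_dtd V E VT ET X W"
  shows "\<exists>VT' ET' X' W'. is_dtd V E VT' ET' X' W' \<and> dtd_width VT' ET' X' W' = dtd_width VT ET X W
           \<and> (\<forall>r\<in>VT'. card (W' r) = 1)"
  using D
proof (induction "bag_excess VT W" arbitrary: VT ET X W rule: less_induct)
  case less
  show ?case
  proof (cases "\<forall>r\<in>VT. card (W r) = 1")
    case True
    then show ?thesis using less.prems by blast
  next
    case False
    then obtain r where r: "r \<in> VT" and "card (W r) \<noteq> 1" by blast
    have T: "out_tree VT ET" and WV: "W r \<noteq> {}" "W r \<subseteq> V"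
      using less.prems r by (auto simp: is_dtd_def)
    then have fin: "finite VT" by (simp add: out_tree_def underlying_tree_def)
    obtain w where w: "w \<in> W r" using WV by blast
    with \<open>card (W r) \<noteq> 1\<close> have wne: "W r \<noteq> {w}" by auto
    obtain n where n: "n \<notin> VT" using ex_new_if_finite[OF infinite_UNIV_nat fin] by blast
    have "bag_excess (insert n VT) (W(r := W r - {w}, n := {w})) < bag_excess VT W"
      using bag_excess_split_off[where W = W, OF fin r w wne _ n] WV finV finite_subset by blast
    from less.hyps[OF this is_dtd_split_off[OF less.prems r w wne n]]
    show ?thesis unfolding dtd_width_split_off[where W = W, OF T r w n] .
  qed
qed

lemma is_dtd_single_node:
  assumes "V \<noteq> {}"
  shows "is_dtd V E {0} {} (\<lambda>_. {}) (\<lambda>_. V)"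
proof -
  have "\<not> ucycle (und {}) xs" for xs :: "nat list"
    unfolding ucycle_def und_def by auto
  then have "out_tree {0::nat} {}" unfolding out_tree_def underlying_tree_def by auto
  then show ?thesis using assms unfolding is_dtd_def by auto
qed

lemma directed_tree_width_attained:
  assumes "V \<noteq> {}"
  obtains VT ET X W where "is_dtd V E VT ET X W" "dtd_width VT ET X W = directed_tree_width V E"
proof -
  have "\<exists>VT ET X W. is_dtd V E VT ET X W \<and> dtd_width VT ET X W = directed_tree_width V E"
    unfolding directed_tree_width_def by (rule LeastI_ex) (use is_dtd_single_node[OF assms] in blast)
  then show thesis using that by blast
qed

theorem lemma4p8:
  fixes V :: "'a set" and E :: "('a \<times> 'a) set" and k :: nat
  assumes "digraph V E" and "V \<noteq> {}"
    and "directed_tree_width V E \<le> k"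
  shows "\<exists>VT ET X W. is_dtd V E VT ET X W \<and> dtd_width VT ET X W \<le> k
            \<and> (\<forall>r\<in>VT. card (W r) = 1)"
proof -
  obtain VT ET X W where "is_dtd V E VT ET X W" and "dtd_width VT ET X W = directed_tree_width V E"
    using directed_tree_width_attained[OF assms(2)] .
  moreover have "finite V" using assms(1) by (simp add: digraph_def)
  ultimately obtain VT' ET' X' W' where "is_dtd V E VT' ET' X' W'"
      "dtd_width VT' ET' X' W' = directed_tree_width V E" "\<forall>r\<in>VT'. card (W' r) = 1"
    using dtd_singleton_bags_same_width by metis
  then show ?thesis using assms(3) by (metis order.eq_iff)
qed

end
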